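(* Let $G$ be a connected graph with $n\geq 2$ vertices and $m$ edges, and let $S(G)$ be its subdivision. Then $$R^*(S(G))=8R^*(G)+2m(2m-2n+1).$$
   Context: All graphs are finite, undirected, without loops or multiple edges. For a connected graph $H$ and vertices $i,j$, the resistance distance $\Omega_{ij}$ is the effective resistance between $i$ and $j$ in the electrical network obtained from $H$ by replacing each edge by a unit resistor. With $d_i$ the degree of vertex $i$ in $H$ and the sum over unordered pairs of distinct vertices of $H$, the multiplicative degree-Kirchhoff index is $R^*(H)=\sum_{\{i,j\}\subseteq V(H)}d_id_j\Omega_{ij}$ (degrees and resistances taken in $H$). The subdivision $S(G)$ is the graph obtained from $G$ by replacing every edge with a path of length two (i.e., inserting one new vertex of degree 2 on each edge). *)

theory Defs
  imports Main "HOL-Library.Disjoint_Sets" Complex_Main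
begin

definition simple_graph :: "'a set \<Rightarrow> 'a set set \<Rightarrow> bool" where
  "simple_graph V E \<longleftrightarrow> finite V \<and> (\<forall>e\<in>E. e \<subseteq> V \<and> card e = 2)"

definition adj :: "'a set set \<Rightarrow> 'a \<Rightarrow> 'a \<Rightarrow> bool" where
  "adj E u v \<longleftrightarrow> {u, v} \<in> E"

definition connected_graph :: "'a set \<Rightarrow> 'a set set \<Rightarrow> bool" where
  "connected_graph V E \<longleftrightarrow> simple_graph V E \<and> V \<noteq> {} \<and>
     (\<forall>u\<in>V. \<forall>v\<in>V. (adj E)\<^sup>*\<^sup>* u v)"

definition degree :: "'a set set \<Rightarrow> 'a \<Rightarrow> nat" where
  "degree E v = card {e\<in>E. v \<in> e}"

text \<open>Resistance distance: inject a unit current at i and extract it at j in the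
  network with unit resistors on the edges; by Kirchhoff's current law and Ohm's law
  the node potentials x satisfy, at every vertex v,
  sum over neighbours u of (x v - x u) = [v = i] - [v = j].
  The effective resistance is the potential difference x i - x j (unique for connected graphs).\<close>
definition resistance :: "'a set \<Rightarrow> 'a set set \<Rightarrow> 'a \<Rightarrow> 'a \<Rightarrow> real" where
  "resistance V E i j = (THE r. \<exists>x :: 'a \<Rightarrow> real.
      (\<forall>v\<in>V. (\<Sum>u\<in>{u\<in>V. adj E v u}. x v - x u) =
               (if v = i then 1 else 0) - (if v = j then 1 else 0)) \<and>
      r = x i - x j)"

text \<open>Multiplicative degree-Kirchhoff index: sum over unordered pairs of distinct vertices,
  written as half the sum over ordered pairs of distinct vertices.\<close>
definition mult_deg_kirchhoff :: "'a set \<Rightarrow> 'a set set \<Rightarrow> real" where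
  "mult_deg_kirchhoff V E = (1/2) * (\<Sum>i\<in>V. \<Sum>j\<in>V - {i}.
      real (degree E i) * real (degree E j) * resistance V E i j)"

text \<open>Subdivision: vertices Inl v for old vertices, Inr e for a new vertex on edge e.\<close>
definition subdiv_vertices :: "'a set \<Rightarrow> 'a set set \<Rightarrow> ('a + 'a set) set" where
  "subdiv_vertices V E = Inl ` V \<union> Inr ` E"

definition subdiv_edges :: "'a set set \<Rightarrow> ('a + 'a set) set set" where
  "subdiv_edges E = {{Inl u, Inr e} | u e. e \<in> E \<and> u \<in> e}"

end

theory Submission
  imports Defs "Jordan_Normal_Form.Determinant"
begin

text \<open>Ground a vertex w and let g q be the potential of a unit current entering at q and
  leaving at w. Then Omega(i,j) = g i i + g j j - g j i - g i j, hence R*(G) = 2m P - Q with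
  P = sum_i d_i g i i and Q = sum_{i,j} d_i d_j g j i. The corresponding potentials on S(G),
  grounded at the same w, are explicit in terms of g. Substituting them gives
  P(S(G)) = 4P - (n - 1) + m and Q(S(G)) = 8Q + 2m, and the formula follows. The term n - 1
  enters as sum_i (Laplacian of g i)(i).\<close>

section \<open>Nonsingular linear systems\<close>

lemma square_mat_injective_imp_solvable:
  fixes A :: "'a::field mat"
  assumes A: "A \<in> carrier_mat n n" and b: "b \<in> carrier_vec n"
    and inj: "\<And>v. v \<in> carrier_vec n \<Longrightarrow> A *\<^sub>v v = 0\<^sub>v n \<Longrightarrow> v = 0\<^sub>v n"
  shows "\<exists>v\<in>carrier_vec n. A *\<^sub>v v = b"
proof -
  have "det A \<noteq> 0"
    using det_0_iff_vec_prod_zero_field[OF A] inj by blast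
  from det_non_zero_imp_unit[OF A this, of "()"]
  obtain B where B: "B \<in> carrier_mat n n" "A * B = 1\<^sub>m n"
    unfolding Units_def ring_mat_def by auto
  show ?thesis
    using A B b by (intro bexI[of _ "B *\<^sub>v b"]) (simp_all add: assoc_mult_mat_vec[symmetric])
qed

lemma finite_linear_system_injective_imp_solvable:
  fixes M :: "'a \<Rightarrow> 'a \<Rightarrow> real"
  assumes fin: "finite I"
    and inj: "\<And>x. \<forall>i\<in>I. (\<Sum>j\<in>I. M i j * x j) = 0 \<Longrightarrow> \<forall>j\<in>I. x j = 0"
  shows "\<exists>x. \<forall>i\<in>I. (\<Sum>j\<in>I. M i j * x j) = b i"
proof -
  define n where "n = card I"
  obtain \<phi> where bij: "bij_betw \<phi> {0..<n} I"
    using ex_bij_betw_nat_finite[OF fin] n_def by blast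
  define \<psi> where "\<psi> = inv_into {0..<n} \<phi>"
  have \<psi>\<phi>: "\<psi> (\<phi> k) = k" if "k < n" for k
    using bij that unfolding \<psi>_def by (simp add: bij_betw_inv_into_left)
  have \<phi>_in: "\<phi> k \<in> I" if "k < n" for k
    using bij that by (auto simp: bij_betw_def)
  have \<phi>_onto: "\<exists>k<n. i = \<phi> k" if "i \<in> I" for i
    using bij that by (auto simp: bij_betw_def image_iff)
  define A :: "real mat" where "A = mat n n (\<lambda>(k, l). M (\<phi> k) (\<phi> l))"
  have A: "A \<in> carrier_mat n n" unfolding A_def by simp
  have mult: "(\<Sum>j\<in>I. M (\<phi> k) j * v $ \<psi> j) = (A *\<^sub>v v) $ k"
    if "k < n" "v \<in> carrier_vec n" for k v
  proof -
    have "(\<Sum>j\<in>I. M (\<phi> k) j * v $ \<psi> j) = (\<Sum>l\<in>{0..<n}. M (\<phi> k) (\<phi> l) * v $ \<psi> (\<phi> l))"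
      using sum.reindex_bij_betw[OF bij, of "\<lambda>j. M (\<phi> k) j * v $ \<psi> j"] by simp
    also have "\<dots> = (A *\<^sub>v v) $ k"
      using that A by (simp add: \<psi>\<phi> scalar_prod_def A_def)
    finally show ?thesis .
  qed
  have "\<exists>v\<in>carrier_vec n. A *\<^sub>v v = vec n (\<lambda>k. b (\<phi> k))"
  proof (rule square_mat_injective_imp_solvable[OF A])
    fix v assume v: "v \<in> carrier_vec n" "A *\<^sub>v v = 0\<^sub>v n"
    have "\<forall>i\<in>I. (\<Sum>j\<in>I. M i j * v $ \<psi> j) = 0"
      using mult[OF _ v(1)] v(2) \<phi>_onto by fastforce
    from inj[OF this] have "v $ k = 0" if "k < n" for k
      using \<phi>_in[OF that] \<psi>\<phi>[OF that] by metis
    then show "v = 0\<^sub>v n" using v(1) by (intro eq_vecI) auto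
  qed simp
  then obtain v where v: "v \<in> carrier_vec n" "A *\<^sub>v v = vec n (\<lambda>k. b (\<phi> k))" ..
  show ?thesis
  proof (intro exI ballI)
    fix i assume "i \<in> I"
    then obtain k where "k < n" "i = \<phi> k" using \<phi>_onto by blast
    then show "(\<Sum>j\<in>I. M i j * v $ \<psi> j) = b i"
      using mult[OF _ v(1)] v(2) by simp
  qed
qed

section \<open>Graph Laplacian\<close>

lemma simple_graphD:
  assumes "simple_graph V E"
  shows "finite V" "finite E" "e \<in> E \<Longrightarrow> e \<subseteq> V" "e \<in> E \<Longrightarrow> card e = 2"
proof -
  show "finite V" "e \<in> E \<Longrightarrow> e \<subseteq> V" "e \<in> E \<Longrightarrow> card e = 2"
    using assms by (auto simp: simple_graph_def)
  have "E \<subseteq> Pow V" using assms by (auto simp: simple_graph_def)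
  then show "finite E" using \<open>finite V\<close> by (meson finite_Pow_iff finite_subset)
qed

lemma adj_commute: "adj E u v = adj E v u"
  by (simp add: adj_def insert_commute)

lemma adjD:
  assumes "simple_graph V E" "adj E u v"
  shows "u \<in> V" "v \<in> V" "u \<noteq> v"
proof -
  have e: "{u, v} \<in> E" using assms(2) by (simp add: adj_def)
  show "u \<in> V" "v \<in> V" using simple_graphD(3)[OF assms(1) e] by auto
  show "u \<noteq> v" using simple_graphD(4)[OF assms(1) e] by auto
qed

definition neighbours :: "'a set \<Rightarrow> 'a set set \<Rightarrow> 'a \<Rightarrow> 'a set" where
  "neighbours V E v = {u\<in>V. adj E v u}"

definition laplacian :: "'a set \<Rightarrow> 'a set set \<Rightarrow> ('a \<Rightarrow> real) \<Rightarrow> 'a \<Rightarrow> real" where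
  "laplacian V E x v = (\<Sum>u\<in>neighbours V E v. x v - x u)"

lemma finite_neighbours: "simple_graph V E \<Longrightarrow> finite (neighbours V E v)"
  using simple_graphD(1)[of V E] by (simp add: neighbours_def)

lemma bij_betw_neighbours_incident_edges:
  assumes sg: "simple_graph V E"
  shows "bij_betw (\<lambda>u. {v, u}) (neighbours V E v) {e\<in>E. v \<in> e}"
proof (rule bij_betwI')
  fix e assume "e \<in> {e\<in>E. v \<in> e}"
  then have e: "e \<in> E" "v \<in> e" by auto
  then obtain u where u: "e = {v, u}"
    using simple_graphD(4)[OF sg e(1)] by (metis card_2_iff insert_commute insertE singletonD)
  then have "u \<in> neighbours V E v"
    using simple_graphD(3)[OF sg e(1)] e(1) by (simp add: neighbours_def adj_def)
  with u show "\<exists>u\<in>neighbours V E v. e = {v, u}" by blast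
qed (auto simp: neighbours_def adj_def doubleton_eq_iff)

lemma sum_incident_edges_eq_sum_neighbours:
  "simple_graph V E \<Longrightarrow> (\<Sum>e\<in>{e\<in>E. v \<in> e}. h e) = (\<Sum>u\<in>neighbours V E v. h {v, u})"
  using sum.reindex_bij_betw[OF bij_betw_neighbours_incident_edges] by metis

lemma degree_eq_card_neighbours:
  "simple_graph V E \<Longrightarrow> Defs.degree E v = card (neighbours V E v)"
  unfolding Defs.degree_def using bij_betw_same_card[OF bij_betw_neighbours_incident_edges] by metis

lemma sum_edges_sum_endpoints:
  assumes sg: "simple_graph V E"
  shows "(\<Sum>e\<in>E. \<Sum>c\<in>e. h c e) = (\<Sum>c\<in>V. \<Sum>e\<in>{e\<in>E. c \<in> e}. h c e)"
proof -
  have "(\<Sum>e\<in>E. \<Sum>c\<in>e. h c e) = (\<Sum>e\<in>E. \<Sum>c\<in>{c\<in>V. c \<in> e}. h c e)"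
    using simple_graphD(3)[OF sg] by (intro sum.cong) (auto simp: Int_absorb1 Collect_mem_eq)
  also have "\<dots> = (\<Sum>c\<in>V. \<Sum>e\<in>{e\<in>E. c \<in> e}. h c e)"
    by (rule sum.swap_restrict[OF simple_graphD(2,1)[OF sg]])
  finally show ?thesis .
qed

lemma sum_edges_sum_endpoints_eq_degree:
  "simple_graph V E \<Longrightarrow> (\<Sum>e\<in>E. \<Sum>c\<in>e. h c) = (\<Sum>c\<in>V. real (Defs.degree E c) * h c)"
  by (simp add: sum_edges_sum_endpoints Defs.degree_def)

lemma sum_degree_eq_twice_card_edges:
  assumes sg: "simple_graph V E"
  shows "(\<Sum>c\<in>V. real (Defs.degree E c)) = 2 * real (card E)"
proof -
  have "(\<Sum>c\<in>V. real (Defs.degree E c)) = (\<Sum>e\<in>E. real (card e))"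
    using sum_edges_sum_endpoints_eq_degree[OF sg, of "\<lambda>_. 1"] by simp
  also have "\<dots> = (\<Sum>e\<in>E. 2)"
    using simple_graphD(4)[OF sg] by (intro sum.cong) simp_all
  finally show ?thesis by simp
qed

lemma laplacian_diff: "laplacian V E (\<lambda>v. x v - y v) v = laplacian V E x v - laplacian V E y v"
  unfolding laplacian_def sum_subtractf[symmetric] by (rule sum.cong) auto

lemma laplacian_scale: "laplacian V E (\<lambda>v. c * x v) v = c * laplacian V E x v"
  unfolding laplacian_def by (simp add: sum_distrib_left algebra_simps)

lemma laplacian_sum: "laplacian V E (\<lambda>v. \<Sum>c\<in>A. x c v) v = (\<Sum>c\<in>A. laplacian V E (x c) v)"
  unfolding laplacian_def sum_subtractf[symmetric] by (rule sum.swap)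

lemma laplacian_eq_degree:
  "simple_graph V E \<Longrightarrow>
    laplacian V E x v = real (Defs.degree E v) * x v - (\<Sum>u\<in>neighbours V E v. x u)"
  by (simp add: laplacian_def sum_subtractf degree_eq_card_neighbours)

lemma sum_incident_edges_mean_differences:
  assumes sg: "simple_graph V E"
  shows "(\<Sum>e\<in>{e\<in>E. v \<in> e}. x v - (\<Sum>u\<in>e. x u) / 2) = laplacian V E x v / 2"
proof -
  have "(\<Sum>e\<in>{e\<in>E. v \<in> e}. x v - (\<Sum>u\<in>e. x u) / 2)
      = (\<Sum>u\<in>neighbours V E v. x v - (\<Sum>u'\<in>{v, u}. x u') / 2)"
    by (rule sum_incident_edges_eq_sum_neighbours[OF sg])
  also have "\<dots> = (\<Sum>u\<in>neighbours V E v. (x v - x u) / 2)"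
    by (intro sum.cong) (auto simp: neighbours_def field_simps dest: adjD(3)[OF sg])
  finally show ?thesis by (simp add: laplacian_def sum_divide_distrib)
qed

lemma sum_laplacian_eq_0:
  assumes sg: "simple_graph V E"
  shows "(\<Sum>v\<in>V. laplacian V E x v) = 0"
proof -
  have "(\<Sum>v\<in>V. \<Sum>u\<in>neighbours V E v. x u) = (\<Sum>u\<in>V. \<Sum>v\<in>{v\<in>V. adj E v u}. x u)"
    unfolding neighbours_def using simple_graphD(1)[OF sg] by (intro sum.swap_restrict)
  also have "\<dots> = (\<Sum>u\<in>V. \<Sum>v\<in>neighbours V E u. x u)"
    by (simp add: neighbours_def adj_commute)
  finally show ?thesis unfolding laplacian_def by (simp add: sum_subtractf)
qed

lemma harmonic_imp_constant:
  assumes cg: "connected_graph V E" and harmonic: "\<forall>v\<in>V. laplacian V E x v = 0"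
    and "u \<in> V" "v \<in> V"
  shows "x u = x v"
proof -
  have sg: "simple_graph V E" and "finite V" "V \<noteq> {}"
    using cg simple_graphD(1) by (auto simp: connected_graph_def)
  define M where "M = Max (x ` V)"
  have "M \<in> x ` V"
    unfolding M_def using \<open>finite V\<close> \<open>V \<noteq> {}\<close> by (intro Max_in) auto
  then obtain v0 where v0: "v0 \<in> V" "x v0 = M" by auto
  have le: "x y \<le> M" if "y \<in> V" for y
    unfolding M_def using \<open>finite V\<close> that by simp
  have propagate: "x b = M" if "x a = M" "a \<in> V" "adj E a b" for a b
  proof -
    have "b \<in> neighbours V E a" using adjD[OF sg that(3)] that(3) by (simp add: neighbours_def)
    moreover have "\<forall>u\<in>neighbours V E a. x a - x u = 0"
      using harmonic that(2) le that(1) finite_neighbours[OF sg]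
      by (subst sum_nonneg_eq_0_iff[symmetric]) (auto simp: laplacian_def neighbours_def)
    ultimately show ?thesis using that(1) by force
  qed
  have "x y = M" if "y \<in> V" for y
  proof -
    have "(adj E)\<^sup>*\<^sup>* v0 y" using cg v0(1) that by (auto simp: connected_graph_def)
    then have "x y = M \<and> y \<in> V"
      by induction (use v0 propagate adjD(2)[OF sg] in auto)
    then show ?thesis by simp
  qed
  then show ?thesis using assms(3,4) by simp
qed

lemma laplacian_solvable:
  assumes cg: "connected_graph V E" and b: "(\<Sum>v\<in>V. b v) = 0"
  shows "\<exists>x. \<forall>v\<in>V. laplacian V E x v = b v"
proof -
  have sg: "simple_graph V E" and fin: "finite V" and "V \<noteq> {}"
    using cg simple_graphD(1) by (auto simp: connected_graph_def)
  then have card_pos: "real (card V) > 0" by (simp add: card_gt_0_iff)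
  \<comment> \<open>The Laplacian plus the all-ones matrix is nonsingular on a connected graph.\<close>
  define M where "M i j = (if i = j then real (Defs.degree E i) else 0)
    - (if adj E i j then 1 else 0) + (1::real)" for i j
  have M: "(\<Sum>j\<in>V. M i j * x j) = laplacian V E x i + (\<Sum>j\<in>V. x j)" if "i \<in> V" for i x
  proof -
    have "(\<Sum>j\<in>V. M i j * x j) = (\<Sum>j\<in>V. (if i = j then real (Defs.degree E i) * x j else 0))
       - (\<Sum>j\<in>V. (if adj E i j then x j else 0)) + (\<Sum>j\<in>V. x j)"
      unfolding sum_subtractf[symmetric] sum.distrib[symmetric]
      by (intro sum.cong) (auto simp: M_def algebra_simps)
    also have "\<dots> = real (Defs.degree E i) * x i - (\<Sum>j\<in>neighbours V E i. x j) + (\<Sum>j\<in>V. x j)"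
      using that fin by (simp add: neighbours_def sum.inter_filter)
    finally show ?thesis by (simp add: laplacian_eq_degree[OF sg])
  qed
  have total: "(\<Sum>v\<in>V. x v) = (\<Sum>v\<in>V. c v) / card V"
    if "\<forall>i\<in>V. laplacian V E x i + (\<Sum>j\<in>V. x j) = c i" for x c
  proof -
    have "(\<Sum>i\<in>V. c i) = (\<Sum>i\<in>V. laplacian V E x i + (\<Sum>j\<in>V. x j))"
      using that by simp
    also have "\<dots> = (\<Sum>i\<in>V. laplacian V E x i) + card V * (\<Sum>j\<in>V. x j)"
      by (simp add: sum.distrib)
    finally show ?thesis using card_pos by (simp add: sum_laplacian_eq_0[OF sg] field_simps)
  qed
  have "\<exists>x. \<forall>i\<in>V. (\<Sum>j\<in>V. M i j * x j) = b i"
  proof (rule finite_linear_system_injective_imp_solvable[OF fin])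
    fix x assume "\<forall>i\<in>V. (\<Sum>j\<in>V. M i j * x j) = 0"
    then have x: "\<forall>i\<in>V. laplacian V E x i + (\<Sum>j\<in>V. x j) = 0" by (simp add: M)
    then have sum0: "(\<Sum>j\<in>V. x j) = 0" using total[of x "\<lambda>_. 0"] by simp
    show "\<forall>j\<in>V. x j = 0"
    proof
      fix k assume k: "k \<in> V"
      have "x j = x k" if "j \<in> V" for j
        using harmonic_imp_constant[OF cg _ that k] x sum0 by simp
      then have "(\<Sum>j\<in>V. x j) = card V * x k" by simp
      then show "x k = 0" using sum0 card_pos by simp
    qed
  qed
  then obtain x where x: "\<forall>i\<in>V. laplacian V E x i + (\<Sum>j\<in>V. x j) = b i" by (auto simp: M)
  moreover have "(\<Sum>j\<in>V. x j) = 0" using total[OF x] b by simp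
  ultimately show ?thesis by auto
qed

section \<open>Green functions and resistance\<close>

lemma resistance_eq_potential_difference:
  assumes cg: "connected_graph V E" and "i \<in> V" "j \<in> V"
    and x: "\<forall>v\<in>V. laplacian V E x v = (if v = i then 1 else 0) - (if v = j then 1 else 0)"
  shows "resistance V E i j = x i - x j"
  unfolding resistance_def
proof (rule the_equality)
  show "\<exists>y. (\<forall>v\<in>V. (\<Sum>u\<in>{u \<in> V. adj E v u}. y v - y u) =
      (if v = i then 1 else 0) - (if v = j then 1 else 0)) \<and> x i - x j = y i - y j"
    using x by (intro exI[of _ x]) (simp add: laplacian_def neighbours_def)
next
  fix r :: real assume "\<exists>y. (\<forall>v\<in>V. (\<Sum>u\<in>{u \<in> V. adj E v u}. y v - y u) =
      (if v = i then 1 else 0) - (if v = j then 1 else 0)) \<and> r = y i - y j"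
  then obtain y where
    y: "\<forall>v\<in>V. laplacian V E y v = (if v = i then 1 else 0) - (if v = j then 1 else 0)"
    and r: "r = y i - y j"
    by (auto simp: laplacian_def neighbours_def)
  have "\<forall>v\<in>V. laplacian V E (\<lambda>v. x v - y v) v = 0" using x y by (simp add: laplacian_diff)
  from harmonic_imp_constant[OF cg this \<open>i \<in> V\<close> \<open>j \<in> V\<close>] show "r = x i - x j" using r by simp
qed

definition green_function :: "'a set \<Rightarrow> 'a set set \<Rightarrow> 'a \<Rightarrow> ('a \<Rightarrow> 'a \<Rightarrow> real) \<Rightarrow> bool" where
  "green_function V E w g \<longleftrightarrow>
     (\<forall>q\<in>V. \<forall>v\<in>V. laplacian V E (g q) v = (if v = q then 1 else 0) - (if v = w then 1 else 0))"

lemma green_function_exists: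
  assumes "connected_graph V E" "w \<in> V"
  shows "\<exists>g. green_function V E w g"
proof -
  have "\<forall>q\<in>V. \<exists>x. \<forall>v\<in>V. laplacian V E x v = (if v = q then 1 else 0) - (if v = w then 1 else 0)"
    using assms simple_graphD(1)[of V E]
    by (intro ballI laplacian_solvable) (auto simp: connected_graph_def sum_subtractf)
  then show ?thesis unfolding green_function_def by metis
qed

lemma resistance_green:
  assumes cg: "connected_graph V E" and g: "green_function V E w g"
    and "i \<in> V" "j \<in> V"
  shows "resistance V E i j = g i i + g j j - g j i - g i j"
proof -
  have "\<forall>v\<in>V. laplacian V E (\<lambda>v. g i v - g j v) v
      = (if v = i then 1 else 0) - (if v = j then 1 else 0)"
    using g assms(3,4) by (simp add: laplacian_diff green_function_def)
  from resistance_eq_potential_difference[OF cg assms(3,4) this] show ?thesis by simp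
qed

definition green_trace :: "'a set \<Rightarrow> 'a set set \<Rightarrow> ('a \<Rightarrow> 'a \<Rightarrow> real) \<Rightarrow> real" where
  "green_trace V E g = (\<Sum>i\<in>V. real (Defs.degree E i) * g i i)"

definition green_form :: "'a set \<Rightarrow> 'a set set \<Rightarrow> ('a \<Rightarrow> 'a \<Rightarrow> real) \<Rightarrow> real" where
  "green_form V E g = (\<Sum>i\<in>V. \<Sum>j\<in>V. real (Defs.degree E i) * real (Defs.degree E j) * g j i)"

lemma mult_deg_kirchhoff_green:
  assumes cg: "connected_graph V E" and g: "green_function V E w g"
  shows "mult_deg_kirchhoff V E = 2 * real (card E) * green_trace V E g - green_form V E g"
proof -
  have sg: "simple_graph V E" and fin: "finite V"
    using cg simple_graphD(1) by (auto simp: connected_graph_def)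
  define d where "d i = real (Defs.degree E i)" for i
  define P where "P = (\<Sum>i\<in>V. d i * g i i)"
  define Q where "Q = (\<Sum>i\<in>V. \<Sum>j\<in>V. d i * d j * g j i)"
  have row: "(\<Sum>j\<in>V - {i}. d i * d j * resistance V E i j)
      = (\<Sum>j\<in>V. d i * d j * (g i i + g j j - g j i - g i j))" if "i \<in> V" for i
  proof -
    have "(\<Sum>j\<in>V - {i}. d i * d j * resistance V E i j)
        = (\<Sum>j\<in>V - {i}. d i * d j * (g i i + g j j - g j i - g i j))"
      using resistance_green[OF cg g that] by (intro sum.cong) auto
    also have "\<dots> = (\<Sum>j\<in>V. d i * d j * (g i i + g j j - g j i - g i j))"
      using sum_diff1[OF fin, of "\<lambda>j. d i * d j * (g i i + g j j - g j i - g i j)" i] that by simp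
    finally show ?thesis .
  qed
  have diag: "(\<Sum>i\<in>V. \<Sum>j\<in>V. d i * d j * g i i) = (\<Sum>i\<in>V. d i) * P"
    unfolding P_def by (simp add: sum_distrib_left sum_distrib_right mult_ac)
  have "(\<Sum>i\<in>V. \<Sum>j\<in>V. d i * d j * (g i i + g j j - g j i - g i j))
      = (\<Sum>i\<in>V. \<Sum>j\<in>V. d i * d j * g i i) + (\<Sum>i\<in>V. \<Sum>j\<in>V. d i * d j * g j j)
        - Q - (\<Sum>i\<in>V. \<Sum>j\<in>V. d i * d j * g i j)"
    unfolding Q_def by (simp add: algebra_simps sum.distrib sum_subtractf)
  also have "(\<Sum>i\<in>V. \<Sum>j\<in>V. d i * d j * g j j) = (\<Sum>i\<in>V. \<Sum>j\<in>V. d i * d j * g i i)"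
    by (subst sum.swap) (simp add: mult_ac)
  also have "(\<Sum>i\<in>V. \<Sum>j\<in>V. d i * d j * g i j) = Q"
    unfolding Q_def by (subst sum.swap) (simp add: mult_ac)
  finally have "(\<Sum>i\<in>V. \<Sum>j\<in>V. d i * d j * (g i i + g j j - g j i - g i j))
      = 2 * ((\<Sum>i\<in>V. d i) * P - Q)"
    using diag by simp
  then have "mult_deg_kirchhoff V E = (\<Sum>i\<in>V. d i) * P - Q"
    unfolding mult_deg_kirchhoff_def d_def[symmetric] using row by simp
  then show ?thesis
    unfolding green_trace_def green_form_def P_def Q_def d_def
      sum_degree_eq_twice_card_edges[OF sg] .
qed

lemma sum_edges_green_endpoints:
  assumes sg: "simple_graph V E" and g: "green_function V E w g" and w: "w \<in> V"
  shows "(\<Sum>e\<in>E. \<Sum>u\<in>e. \<Sum>c\<in>e. g c u) = 2 * green_trace V E g - (real (card V) - 1)"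
proof -
  have "(\<Sum>e\<in>E. \<Sum>u\<in>e. \<Sum>c\<in>e. g c u) = (\<Sum>e\<in>E. \<Sum>c\<in>e. \<Sum>u\<in>e. g c u)"
    by (intro sum.cong refl sum.swap)
  also have "\<dots> = (\<Sum>c\<in>V. \<Sum>e\<in>{e\<in>E. c \<in> e}. \<Sum>u\<in>e. g c u)"
    by (rule sum_edges_sum_endpoints[OF sg])
  also have "\<dots> = (\<Sum>c\<in>V. \<Sum>u\<in>neighbours V E c. g c c + g c u)"
    by (intro sum.cong refl, subst sum_incident_edges_eq_sum_neighbours[OF sg])
      (auto intro!: sum.cong simp: neighbours_def dest: adjD(3)[OF sg])
  also have "\<dots> = (\<Sum>c\<in>V. 2 * (real (Defs.degree E c) * g c c) - laplacian V E (g c) c)"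
    by (intro sum.cong refl)
      (simp add: laplacian_eq_degree[OF sg] sum.distrib degree_eq_card_neighbours[OF sg])
  also have "\<dots> = 2 * green_trace V E g - (\<Sum>c\<in>V. 1 - (if c = w then 1 else 0))"
    using g by (simp add: green_function_def green_trace_def sum_subtractf sum_distrib_left)
  also have "(\<Sum>c\<in>V. 1 - (if c = w then 1 else 0)) = real (card V) - 1"
    using w simple_graphD(1)[OF sg] by (simp add: sum_subtractf)
  finally show ?thesis .
qed

section \<open>The subdivision graph\<close>

lemma adj_subdiv_edges_iff:
  "adj (subdiv_edges E) a b \<longleftrightarrow>
     (\<exists>u e. e \<in> E \<and> u \<in> e \<and> (a = Inl u \<and> b = Inr e \<or> a = Inr e \<and> b = Inl u))"
  unfolding adj_def subdiv_edges_def by (auto simp: doubleton_eq_iff)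

lemma simple_graph_subdiv:
  assumes sg: "simple_graph V E"
  shows "simple_graph (subdiv_vertices V E) (subdiv_edges E)"
  unfolding simple_graph_def
proof (intro conjI ballI)
  show "finite (subdiv_vertices V E)"
    using simple_graphD(1,2)[OF sg] by (simp add: subdiv_vertices_def)
next
  fix e assume "e \<in> subdiv_edges E"
  then obtain u f where e: "e = {Inl u, Inr f}" "f \<in> E" "u \<in> f"
    by (auto simp: subdiv_edges_def)
  then show "e \<subseteq> subdiv_vertices V E"
    using simple_graphD(3)[OF sg] by (auto simp: subdiv_vertices_def)
  show "card e = 2" using e by simp
qed

lemma rtranclp_adj_subdiv_Inl:
  "(adj E)\<^sup>*\<^sup>* u v \<Longrightarrow> (adj (subdiv_edges E))\<^sup>*\<^sup>* (Inl u) (Inl v)"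
proof (induction rule: rtranclp_induct)
  case (step a b)
  then have "adj (subdiv_edges E) (Inl a) (Inr {a, b})" "adj (subdiv_edges E) (Inr {a, b}) (Inl b)"
    unfolding adj_subdiv_edges_iff by (auto simp: adj_def)
  with step.IH show ?case by (meson rtranclp.rtrancl_into_rtrancl)
qed simp


lemma connected_graph_subdiv:
  assumes cg: "connected_graph V E"
  shows "connected_graph (subdiv_vertices V E) (subdiv_edges E)"
proof -
  let ?A = "adj (subdiv_edges E)"
  have sg: "simple_graph V E" and conn: "\<And>u v. u \<in> V \<Longrightarrow> v \<in> V \<Longrightarrow> (adj E)\<^sup>*\<^sup>* u v"
    using cg by (auto simp: connected_graph_def)
  obtain v0 where v0: "v0 \<in> V" using cg by (auto simp: connected_graph_def)
  have reach: "?A\<^sup>*\<^sup>* (Inl v0) y" if y: "y \<in> subdiv_vertices V E" for y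
  proof -
    consider u where "u \<in> V" "y = Inl u" | e where "e \<in> E" "y = Inr e"
      using y by (auto simp: subdiv_vertices_def)
    then show ?thesis
    proof cases
      case (1 u)
      then show ?thesis using rtranclp_adj_subdiv_Inl[OF conn[OF v0 \<open>u \<in> V\<close>]] by simp
    next
      case (2 e)
      then obtain a b where ab: "e = {a, b}"
        using simple_graphD(4)[OF sg] card_2_iff by metis
      then have "a \<in> V" using simple_graphD(3)[OF sg \<open>e \<in> E\<close>] by simp
      have "?A (Inl a) y" unfolding adj_subdiv_edges_iff using 2 ab by blast
      with rtranclp_adj_subdiv_Inl[OF conn[OF v0 \<open>a \<in> V\<close>]] show ?thesis
        by (rule rtranclp.rtrancl_into_rtrancl)
    qed
  qed
  have "symp ?A\<^sup>*\<^sup>*" by (rule symp_rtranclp) (simp add: symp_def adj_commute)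
  then have "?A\<^sup>*\<^sup>* y z" if "y \<in> subdiv_vertices V E" "z \<in> subdiv_vertices V E" for y z
    using rtranclp_trans sympD reach[OF that(1)] reach[OF that(2)] by metis
  moreover have "subdiv_vertices V E \<noteq> {}" using v0 by (auto simp: subdiv_vertices_def)
  ultimately show ?thesis using simple_graph_subdiv[OF sg] by (simp add: connected_graph_def)
qed

lemma neighbours_subdiv_Inl:
  "neighbours (subdiv_vertices V E) (subdiv_edges E) (Inl v) = Inr ` {e\<in>E. v \<in> e}"
  unfolding neighbours_def adj_subdiv_edges_iff by (auto simp: subdiv_vertices_def)

lemma neighbours_subdiv_Inr:
  "simple_graph V E \<Longrightarrow> e \<in> E \<Longrightarrow> neighbours (subdiv_vertices V E) (subdiv_edges E) (Inr e) = Inl ` e"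
  unfolding neighbours_def adj_subdiv_edges_iff
  by (auto simp: subdiv_vertices_def dest: simple_graphD(3))

lemma degree_subdiv_Inl:
  assumes "simple_graph V E"
  shows "Defs.degree (subdiv_edges E) (Inl v) = Defs.degree E v"
  unfolding degree_eq_card_neighbours[OF simple_graph_subdiv[OF assms]] neighbours_subdiv_Inl
  by (simp add: card_image Defs.degree_def)

lemma degree_subdiv_Inr:
  assumes "simple_graph V E" "e \<in> E"
  shows "Defs.degree (subdiv_edges E) (Inr e) = 2"
  unfolding degree_eq_card_neighbours[OF simple_graph_subdiv[OF assms(1)]]
    neighbours_subdiv_Inr[OF assms]
  using simple_graphD(4)[OF assms] by (simp add: card_image)

lemma laplacian_subdiv_Inr:
  assumes "simple_graph V E" "e \<in> E"
  shows "laplacian (subdiv_vertices V E) (subdiv_edges E) y (Inr e)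
    = 2 * y (Inr e) - (\<Sum>u\<in>e. y (Inl u))"
  unfolding laplacian_def neighbours_subdiv_Inr[OF assms]
  using simple_graphD(4)[OF assms] by (simp add: sum.reindex sum_subtractf card_image)

lemma laplacian_subdiv_Inl:
  assumes sg: "simple_graph V E"
  shows "laplacian (subdiv_vertices V E) (subdiv_edges E) y (Inl v)
    = laplacian V E (\<lambda>u. y (Inl u)) v / 2 + (\<Sum>e\<in>{e\<in>E. v \<in> e}. (\<Sum>u\<in>e. y (Inl u)) / 2 - y (Inr e))"
proof -
  have "laplacian (subdiv_vertices V E) (subdiv_edges E) y (Inl v)
      = (\<Sum>e\<in>{e\<in>E. v \<in> e}. y (Inl v) - y (Inr e))"
    unfolding laplacian_def neighbours_subdiv_Inl by (simp add: sum.reindex)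
  also have "\<dots> = (\<Sum>e\<in>{e\<in>E. v \<in> e}. y (Inl v) - (\<Sum>u\<in>e. y (Inl u)) / 2)
      + (\<Sum>e\<in>{e\<in>E. v \<in> e}. (\<Sum>u\<in>e. y (Inl u)) / 2 - y (Inr e))"
    unfolding sum.distrib[symmetric] by simp
  finally show ?thesis
    using sum_incident_edges_mean_differences[OF sg, of "\<lambda>u. y (Inl u)" v] by simp
qed

lemma sum_subdiv_vertices:
  assumes "simple_graph V E"
  shows "(\<Sum>y\<in>subdiv_vertices V E. h y) = (\<Sum>v\<in>V. h (Inl v)) + (\<Sum>e\<in>E. h (Inr e))"
  unfolding subdiv_vertices_def using simple_graphD(1,2)[OF assms]
  by (subst sum.union_disjoint) (auto simp: sum.reindex)

lemma card_subdiv_edges: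
  assumes sg: "simple_graph V E"
  shows "card (subdiv_edges E) = 2 * card E"
proof -
  have "2 * real (card (subdiv_edges E))
      = (\<Sum>y\<in>subdiv_vertices V E. real (Defs.degree (subdiv_edges E) y))"
    using sum_degree_eq_twice_card_edges[OF simple_graph_subdiv[OF sg]] by simp
  also have "\<dots> = (\<Sum>v\<in>V. real (Defs.degree E v)) + (\<Sum>e\<in>E. 2)"
    unfolding sum_subdiv_vertices[OF sg]
    by (simp add: degree_subdiv_Inl[OF sg] degree_subdiv_Inr[OF sg])
  finally show ?thesis by (simp add: sum_degree_eq_twice_card_edges[OF sg])
qed

text \<open>Every edge of S(G) carries the current of an edge of G through twice the resistance, so
  potentials at old vertices double; a current injected at the new vertex on f enters G split
  equally between the endpoints of f. A new vertex on e sits at the mean of the potentials of the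
  endpoints of e, except that a unit current injected there raises it by a further 1/2.\<close>
definition subdiv_green :: "('a \<Rightarrow> 'a \<Rightarrow> real) \<Rightarrow> 'a + 'a set \<Rightarrow> 'a + 'a set \<Rightarrow> real" where
  "subdiv_green g q =
     (let x = (\<lambda>v. case q of Inl p \<Rightarrow> 2 * g p v | Inr f \<Rightarrow> (\<Sum>c\<in>f. g c v))
      in (\<lambda>y. case y of Inl v \<Rightarrow> x v | Inr e \<Rightarrow> (\<Sum>u\<in>e. x u) / 2 + (if q = Inr e then 1/2 else 0)))"

lemma subdiv_green_simps:
  "subdiv_green g (Inl p) (Inl v) = 2 * g p v"
  "subdiv_green g (Inr f) (Inl v) = (\<Sum>c\<in>f. g c v)"
  "subdiv_green g q (Inr e) = (\<Sum>u\<in>e. subdiv_green g q (Inl u)) / 2 + (if q = Inr e then 1/2 else 0)"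
  by (simp_all add: subdiv_green_def Let_def)

lemma green_function_subdiv:
  assumes sg: "simple_graph V E" and g: "green_function V E w g"
  shows "green_function (subdiv_vertices V E) (subdiv_edges E) (Inl w) (subdiv_green g)"
  unfolding green_function_def
proof (intro ballI)
  fix q y assume q: "q \<in> subdiv_vertices V E" and y: "y \<in> subdiv_vertices V E"
  let ?L = "laplacian (subdiv_vertices V E) (subdiv_edges E) (subdiv_green g q)"
  consider v where "v \<in> V" "y = Inl v" | e where "e \<in> E" "y = Inr e"
    using y by (auto simp: subdiv_vertices_def)
  then show "?L y = (if y = q then 1 else 0) - (if y = Inl w then 1 else 0)"
  proof cases
    case (2 e)
    then show ?thesis by (simp add: laplacian_subdiv_Inr[OF sg] subdiv_green_simps(3)[of g q e])
  next
    case (1 v)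
    have mean: "(\<Sum>u\<in>e. subdiv_green g q (Inl u)) / 2 - subdiv_green g q (Inr e)
        = - (if q = Inr e then 1/2 else 0)" for e
      by (simp add: subdiv_green_simps(3)[of g q e])
    have L: "?L y = laplacian V E (\<lambda>u. subdiv_green g q (Inl u)) v / 2
        - (\<Sum>e\<in>{e\<in>E. v \<in> e}. if q = Inr e then 1/2 else 0)"
      using 1 by (simp add: laplacian_subdiv_Inl[OF sg] mean sum_negf)
    consider p where "p \<in> V" "q = Inl p" | f where "f \<in> E" "q = Inr f"
      using q by (auto simp: subdiv_vertices_def)
    then show ?thesis
    proof cases
      case (1 p)
      have "laplacian V E (g p) v = (if v = p then 1 else 0) - (if v = w then 1 else 0)"
        using g 1 \<open>v \<in> V\<close> by (simp add: green_function_def)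
      with L show ?thesis
        using 1 \<open>y = Inl v\<close> by (simp add: subdiv_green_simps laplacian_scale)
    next
      case (2 f)
      have "f \<subseteq> V" "finite f" "card f = 2"
        using simple_graphD(3,4)[OF sg \<open>f \<in> E\<close>] by (auto intro: card_ge_0_finite)
      then have "laplacian V E (\<lambda>u. \<Sum>c\<in>f. g c u) v
          = (if v \<in> f then 1 else 0) - 2 * (if v = w then 1 else 0)"
        using g \<open>v \<in> V\<close> by (simp add: laplacian_sum green_function_def sum_subtractf subset_iff)
      moreover have "(\<Sum>e\<in>{e\<in>E. v \<in> e}. if Inr f = Inr e then 1/2 else 0)
          = (if v \<in> f then 1/2 else (0::real))"
        using \<open>f \<in> E\<close> simple_graphD(2)[OF sg] by (simp add: sum.delta')
      ultimately show ?thesis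
        using L 2 \<open>y = Inl v\<close> by (simp add: subdiv_green_simps)
    qed
  qed
qed


lemma green_trace_subdiv:
  assumes sg: "simple_graph V E" and g: "green_function V E w g" and w: "w \<in> V"
  shows "green_trace (subdiv_vertices V E) (subdiv_edges E) (subdiv_green g)
    = 4 * green_trace V E g - (real (card V) - 1) + real (card E)"
proof -
  have "green_trace (subdiv_vertices V E) (subdiv_edges E) (subdiv_green g)
      = (\<Sum>v\<in>V. 2 * (real (Defs.degree E v) * g v v)) + (\<Sum>e\<in>E. (\<Sum>u\<in>e. \<Sum>c\<in>e. g c u) + 1)"
    unfolding green_trace_def sum_subdiv_vertices[OF sg]
    by (intro arg_cong2[where f = "(+)"] sum.cong refl)
      (simp_all add: degree_subdiv_Inl[OF sg] degree_subdiv_Inr[OF sg] subdiv_green_simps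
        sum_distrib_left[symmetric])
  then show ?thesis
    by (simp add: sum.distrib sum_distrib_left[symmetric] green_trace_def[symmetric]
        sum_edges_green_endpoints[OF assms])
qed

lemma sum_subdiv_green_new_vertices:
  assumes sg: "simple_graph V E"
  shows "(\<Sum>e\<in>E. \<Sum>f\<in>E. 4 * subdiv_green g (Inr f) (Inr e))
    = 2 * green_form V E g + 2 * real (card E)"
proof -
  define d where "d i = real (Defs.degree E i)" for i
  have edges: "(\<Sum>e\<in>E. \<Sum>c\<in>e. h c) = (\<Sum>c\<in>V. d c * h c)" for h
    unfolding d_def by (rule sum_edges_sum_endpoints_eq_degree[OF sg])
  have "(\<Sum>f\<in>E. 4 * subdiv_green g (Inr f) (Inr e)) = 2 * (\<Sum>u\<in>e. \<Sum>f\<in>E. \<Sum>c\<in>f. g c u) + 2"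
    if "e \<in> E" for e
  proof -
    have "(\<Sum>f\<in>E. 4 * subdiv_green g (Inr f) (Inr e))
        = (\<Sum>f\<in>E. 2 * (\<Sum>u\<in>e. \<Sum>c\<in>f. g c u) + (if f = e then 2 else 0))"
      by (intro sum.cong refl) (simp add: subdiv_green_simps)
    also have "\<dots> = 2 * (\<Sum>f\<in>E. \<Sum>u\<in>e. \<Sum>c\<in>f. g c u) + 2"
      using that simple_graphD(2)[OF sg] by (simp add: sum.distrib sum_distrib_left)
    finally show ?thesis by (subst (asm) sum.swap)
  qed
  then have "(\<Sum>e\<in>E. \<Sum>f\<in>E. 4 * subdiv_green g (Inr f) (Inr e))
      = 2 * (\<Sum>e\<in>E. \<Sum>u\<in>e. \<Sum>f\<in>E. \<Sum>c\<in>f. g c u) + 2 * real (card E)"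
    by (simp add: sum.distrib sum_distrib_left)
  also have "\<dots> = 2 * green_form V E g + 2 * real (card E)"
    unfolding green_form_def edges by (simp add: d_def sum_distrib_left mult_ac)
  finally show ?thesis .
qed

lemma green_form_subdiv:
  assumes sg: "simple_graph V E"
  shows "green_form (subdiv_vertices V E) (subdiv_edges E) (subdiv_green g)
    = 8 * green_form V E g + 2 * real (card E)"
proof -
  define d where "d i = real (Defs.degree E i)" for i
  define Q where "Q = green_form V E g"
  have Q: "Q = (\<Sum>i\<in>V. \<Sum>j\<in>V. d i * d j * g j i)"
    unfolding Q_def green_form_def d_def ..
  have Q': "Q = (\<Sum>i\<in>V. \<Sum>j\<in>V. d j * d i * g i j)"
    unfolding Q by (rule sum.swap)
  have edges: "(\<Sum>e\<in>E. \<Sum>c\<in>e. h c) = (\<Sum>c\<in>V. d c * h c)" for h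
    unfolding d_def by (rule sum_edges_sum_endpoints_eq_degree[OF sg])
  define F where "F i j = real (Defs.degree (subdiv_edges E) i)
    * real (Defs.degree (subdiv_edges E) j) * subdiv_green g j i" for i j
  have "green_form (subdiv_vertices V E) (subdiv_edges E) (subdiv_green g)
      = (\<Sum>v\<in>V. \<Sum>p\<in>V. F (Inl v) (Inl p)) + (\<Sum>e\<in>E. \<Sum>p\<in>V. F (Inr e) (Inl p))
      + ((\<Sum>v\<in>V. \<Sum>f\<in>E. F (Inl v) (Inr f)) + (\<Sum>e\<in>E. \<Sum>f\<in>E. F (Inr e) (Inr f)))"
    unfolding green_form_def F_def[symmetric] sum_subdiv_vertices[OF sg] sum.distrib ..
  also have "(\<Sum>v\<in>V. \<Sum>p\<in>V. F (Inl v) (Inl p)) = 2 * Q"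
    unfolding Q F_def
    by (simp add: degree_subdiv_Inl[OF sg] subdiv_green_simps sum_distrib_left d_def mult_ac)
  also have "(\<Sum>v\<in>V. \<Sum>f\<in>E. F (Inl v) (Inr f)) = (\<Sum>v\<in>V. 2 * d v * (\<Sum>f\<in>E. \<Sum>c\<in>f. g c v))"
    unfolding F_def d_def
    by (intro sum.cong refl) (simp add: degree_subdiv_Inl[OF sg] degree_subdiv_Inr[OF sg]
        subdiv_green_simps sum_distrib_left mult_ac)
  also have "\<dots> = 2 * Q"
    unfolding Q edges by (simp add: sum_distrib_left mult_ac)
  also have "(\<Sum>e\<in>E. \<Sum>p\<in>V. F (Inr e) (Inl p)) = (\<Sum>p\<in>V. 2 * d p * (\<Sum>e\<in>E. \<Sum>u\<in>e. g p u))"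
    unfolding F_def d_def sum_distrib_left
    by (subst sum.swap, intro sum.cong refl)
      (simp add: degree_subdiv_Inl[OF sg] degree_subdiv_Inr[OF sg] subdiv_green_simps
        sum_distrib_left[symmetric])
  also have "\<dots> = 2 * Q"
    unfolding Q' edges by (simp add: sum_distrib_left mult_ac)
  also have "(\<Sum>e\<in>E. \<Sum>f\<in>E. F (Inr e) (Inr f)) = (\<Sum>e\<in>E. \<Sum>f\<in>E. 4 * subdiv_green g (Inr f) (Inr e))"
    unfolding F_def by (intro sum.cong refl) (simp add: degree_subdiv_Inr[OF sg])
  also have "\<dots> = 2 * Q + 2 * real (card E)"
    unfolding Q_def by (rule sum_subdiv_green_new_vertices[OF sg])
  finally show ?thesis unfolding Q_def by simp
qed

theorem theorem2p5:
  fixes V :: "'a set" and E :: "'a set set"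
  assumes "connected_graph V E" and "card V \<ge> 2"
  shows "mult_deg_kirchhoff (subdiv_vertices V E) (subdiv_edges E)
         = 8 * mult_deg_kirchhoff V E
           + 2 * real (card E) * (2 * real (card E) - 2 * real (card V) + 1)"
proof -
  let ?VS = "subdiv_vertices V E"
  let ?ES = "subdiv_edges E"
  have sg: "simple_graph V E" and "V \<noteq> {}"
    using assms(1) by (auto simp: connected_graph_def)
  then obtain w where w: "w \<in> V" by blast
  then obtain g where g: "green_function V E w g"
    using green_function_exists[OF assms(1)] by blast
  have "mult_deg_kirchhoff ?VS ?ES
      = 2 * real (card ?ES) * green_trace ?VS ?ES (subdiv_green g) - green_form ?VS ?ES (subdiv_green g)"
    using connected_graph_subdiv[OF assms(1)] green_function_subdiv[OF sg g]
    by (rule mult_deg_kirchhoff_green)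
  also have "\<dots> = 4 * real (card E) * (4 * green_trace V E g - (real (card V) - 1) + real (card E))
      - (8 * green_form V E g + 2 * real (card E))"
    by (simp add: card_subdiv_edges[OF sg] green_trace_subdiv[OF sg g w] green_form_subdiv[OF sg])
  also have "\<dots> = 8 * (2 * real (card E) * green_trace V E g - green_form V E g)
      + 2 * real (card E) * (2 * real (card E) - 2 * real (card V) + 1)"
    by (simp add: algebra_simps)
  finally show ?thesis
    unfolding mult_deg_kirchhoff_green[OF assms(1) g] .
qed

end
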